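(* Let $(l,k,b)$ be a suspension triplet for $(X_A,\sigma_A)$ and $c=l-k$. If $c'\in C(X_A,\mathbb Z)$ satisfies $[c]=[c']$ in $H^A$, then there exist a suspension triplet $(l',k',b')$ for $(X_A,\sigma_A)$ with $c'=l'-k'$ and a homeomorphism $\Phi:S^{l,k}_{A,b}\to S^{l',k'}_{A,b'}$ such that $\Phi\circ b_A=b'_A$ and $\Phi\circ\phi_{A,t}=\phi_{A,t}\circ\Phi$ for all $t\in\mathbb R_+$, where $b_A(x)=[x,b(x)]\in S^{l,k}_{A,b}$ and $b'_A(x)=[x,b'(x)]\in S^{l',k'}_{A,b'}$ are the base maps.
   Context: Let $N>1$ and $A$ an irreducible $N\times N$ $\{0,1\}$-matrix which is not a permutation matrix. $X_A$ is the compact space of sequences $(x_n)_{n\in\mathbb N}$, $x_n\in\{1,\dots,N\}$, $A(x_n,x_{n+1})=1$, with $\sigma_A((x_n)_n)=(x_{n+1})_n$. $\mathbb Z_+$, $\mathbb R_+$ are nonnegative integers/reals. $H^A$ is the quotient of $C(X_A,\mathbb Z)$ by $\{u-u\circ\sigma_A: u\in C(X_A,\mathbb Z)\}$, $[f]$ the class, $H^A_+$ the classes of $\mathbb Z_+$-valued continuous functions; $[f]\in H^A_+$ is an order unit if for every $[u]\in H^A$ some $n\in\mathbb N$ has $n[f]-[u]\in H^A_+$. A suspension triplet is $(l,k,b)$ with $l,k\in C(X_A,\mathbb R_+)$, $b\in C(X_A,\mathbb R)$ such that $c=l-k$ is integer-valued with $[c]$ an order unit, and $l-b$, $k-b\circ\sigma_A$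 take values in $\mathbb Z_+$. $S^{l,k}_{A,b}$ is the quotient of $\{(x,r)\in X_A\times\mathbb R: r\ge b(x)\}$ by the equivalence relation generated by $(x,r)\sim(\sigma_A(x),r-c(x))$ whenever $r\ge l(x)$, with classes $[x,r]$ and flow $\phi_{A,t}([x,r])=[x,r+t]$, $t\in\mathbb R_+$. *)

theory Defs
  imports "HOL-Analysis.Analysis"
begin

text \<open>Square matrices of size N are functions nat => nat => nat, indices in {1..N}.\<close>

fun matpow :: "nat \<Rightarrow> (nat \<Rightarrow> nat \<Rightarrow> nat) \<Rightarrow> nat \<Rightarrow> nat \<Rightarrow> nat \<Rightarrow> nat" where
  "matpow N A 0 i j = (if i = j then 1 else 0)"
| "matpow N A (Suc n) i j = (\<Sum>m\<in>{1..N}. matpow N A n i m * A m j)"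

definition zero_one_matrix :: "nat \<Rightarrow> (nat \<Rightarrow> nat \<Rightarrow> nat) \<Rightarrow> bool" where
  "zero_one_matrix N A \<longleftrightarrow> (\<forall>i\<in>{1..N}. \<forall>j\<in>{1..N}. A i j \<in> {0,1})"

definition irreducible_matrix :: "nat \<Rightarrow> (nat \<Rightarrow> nat \<Rightarrow> nat) \<Rightarrow> bool" where
  "irreducible_matrix N A \<longleftrightarrow> (\<forall>i\<in>{1..N}. \<forall>j\<in>{1..N}. \<exists>n>0. matpow N A n i j > 0)"

definition permutation_matrix :: "nat \<Rightarrow> (nat \<Rightarrow> nat \<Rightarrow> nat) \<Rightarrow> bool" where
  "permutation_matrix N A \<longleftrightarrow>
     (\<forall>i\<in>{1..N}. \<forall>j\<in>{1..N}. A i j \<in> {0,1}) \<and>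
     (\<forall>i\<in>{1..N}. \<exists>!j. j \<in> {1..N} \<and> A i j = 1) \<and>
     (\<forall>j\<in>{1..N}. \<exists>!i. i \<in> {1..N} \<and> A i j = 1)"

definition XA :: "nat \<Rightarrow> (nat \<Rightarrow> nat \<Rightarrow> nat) \<Rightarrow> (nat \<Rightarrow> nat) set" where
  "XA N A = {x. (\<forall>n. x n \<in> {1..N}) \<and> (\<forall>n. A (x n) (x (Suc n)) = 1)}"

definition shift :: "(nat \<Rightarrow> nat) \<Rightarrow> (nat \<Rightarrow> nat)" where
  "shift x = (\<lambda>n. x (Suc n))"

text \<open>Cohomology H^A: f and g have the same class iff f - g = u - u o shift, u continuous.\<close>

definition cohomologous :: "nat \<Rightarrow> (nat \<Rightarrow> nat \<Rightarrow> nat) \<Rightarrow> ((nat \<Rightarrow> nat) \<Rightarrow> int) \<Rightarrow> ((nat \<Rightarrow> nat) \<Rightarrow> int) \<Rightarrow> bool" where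
  "cohomologous N A f g \<longleftrightarrow>
     (\<exists>u. continuous_on (XA N A) u \<and> (\<forall>x\<in>XA N A. f x - g x = u x - u (shift x)))"

definition in_HA_plus :: "nat \<Rightarrow> (nat \<Rightarrow> nat \<Rightarrow> nat) \<Rightarrow> ((nat \<Rightarrow> nat) \<Rightarrow> int) \<Rightarrow> bool" where
  "in_HA_plus N A f \<longleftrightarrow>
     (\<exists>g. continuous_on (XA N A) g \<and> (\<forall>x\<in>XA N A. g x \<ge> 0) \<and> cohomologous N A f g)"

definition order_unit :: "nat \<Rightarrow> (nat \<Rightarrow> nat \<Rightarrow> nat) \<Rightarrow> ((nat \<Rightarrow> nat) \<Rightarrow> int) \<Rightarrow> bool" where
  "order_unit N A f \<longleftrightarrow> in_HA_plus N A f \<and>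
     (\<forall>u. continuous_on (XA N A) u \<longrightarrow>
        (\<exists>n::nat. in_HA_plus N A (\<lambda>x. int n * f x - u x)))"

definition suspension_triplet ::
  "nat \<Rightarrow> (nat \<Rightarrow> nat \<Rightarrow> nat) \<Rightarrow> ((nat \<Rightarrow> nat) \<Rightarrow> real) \<Rightarrow> ((nat \<Rightarrow> nat) \<Rightarrow> real) \<Rightarrow> ((nat \<Rightarrow> nat) \<Rightarrow> real) \<Rightarrow> bool" where
  "suspension_triplet N A l k b \<longleftrightarrow>
     continuous_on (XA N A) l \<and> (\<forall>x\<in>XA N A. l x \<ge> 0) \<and>
     continuous_on (XA N A) k \<and> (\<forall>x\<in>XA N A. k x \<ge> 0) \<and>
     continuous_on (XA N A) b \<and>
     (\<exists>c. continuous_on (XA N A) c \<and> (\<forall>x\<in>XA N A. l x - k x = of_int (c x)) \<and> order_unit N A c) \<and>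
     (\<forall>x\<in>XA N A. l x - b x \<in> \<int> \<and> l x - b x \<ge> 0) \<and>
     (\<forall>x\<in>XA N A. k x - b (shift x) \<in> \<int> \<and> k x - b (shift x) \<ge> 0)"

definition susp_dom :: "nat \<Rightarrow> (nat \<Rightarrow> nat \<Rightarrow> nat) \<Rightarrow> ((nat \<Rightarrow> nat) \<Rightarrow> real) \<Rightarrow> ((nat \<Rightarrow> nat) \<times> real) set" where
  "susp_dom N A b = {(x, r). x \<in> XA N A \<and> r \<ge> b x}"

definition susp_gen :: "nat \<Rightarrow> (nat \<Rightarrow> nat \<Rightarrow> nat) \<Rightarrow> ((nat \<Rightarrow> nat) \<Rightarrow> real) \<Rightarrow> ((nat \<Rightarrow> nat) \<Rightarrow> real) \<Rightarrow> ((nat \<Rightarrow> nat) \<Rightarrow> real)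
     \<Rightarrow> (((nat \<Rightarrow> nat) \<times> real) \<times> ((nat \<Rightarrow> nat) \<times> real)) set" where
  "susp_gen N A l k b = {((x, r), (shift x, r - (l x - k x))) | x r. (x, r) \<in> susp_dom N A b \<and> r \<ge> l x}"

definition susp_rel :: "nat \<Rightarrow> (nat \<Rightarrow> nat \<Rightarrow> nat) \<Rightarrow> ((nat \<Rightarrow> nat) \<Rightarrow> real) \<Rightarrow> ((nat \<Rightarrow> nat) \<Rightarrow> real) \<Rightarrow> ((nat \<Rightarrow> nat) \<Rightarrow> real)
     \<Rightarrow> (((nat \<Rightarrow> nat) \<times> real) \<times> ((nat \<Rightarrow> nat) \<times> real)) set" where
  "susp_rel N A l k b = Id_on (susp_dom N A b) \<union> (susp_gen N A l k b \<union> (susp_gen N A l k b)\<inverse>)\<^sup>+"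

definition susp_space :: "nat \<Rightarrow> (nat \<Rightarrow> nat \<Rightarrow> nat) \<Rightarrow> ((nat \<Rightarrow> nat) \<Rightarrow> real) \<Rightarrow> ((nat \<Rightarrow> nat) \<Rightarrow> real) \<Rightarrow> ((nat \<Rightarrow> nat) \<Rightarrow> real)
     \<Rightarrow> ((nat \<Rightarrow> nat) \<times> real) set topology" where
  "susp_space N A l k b = topology (\<lambda>U. U \<subseteq> susp_dom N A b // susp_rel N A l k b \<and>
        openin (top_of_set (susp_dom N A b)) (\<Union>U))"

definition susp_class where
  "susp_class N A l k b p = susp_rel N A l k b `` {p}"

definition base_map where
  "base_map N A l k b x = susp_class N A l k b (x, b x)"

definition susp_flow where
  "susp_flow N A l k b t C = susp_rel N A l k b `` ((\<lambda>(x, r). (x, r + t)) ` C)"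

end

theory Submission
  imports Defs
begin

text \<open>
  If \<open>c - c' = u - u \<circ> \<sigma>\<^sub>A\<close> with \<open>u\<close> integer valued and continuous, put \<open>w = M - u\<close> for an upper bound
  \<open>M\<close> of \<open>u\<close> on the compact space \<open>X\<^sub>A\<close>, so that \<open>w \<ge> 0\<close>. Then \<open>l' = l + w\<close>, \<open>k' = k + w \<circ> \<sigma>\<^sub>A\<close>,
  \<open>b' = b + w\<close> is a suspension triplet with \<open>l' - k' = c'\<close>, and the translation
  \<open>(x, r) \<mapsto> (x, r + w x)\<close> maps the domain of the first suspension onto that of the second and
  the generating identifications onto each other. It therefore induces a homeomorphism of the
  quotients, which visibly respects base points and the flow.
\<close>

lemma continuous_on_int_compose:
  "continuous_on S (u :: 'a::topological_space \<Rightarrow> int) \<Longrightarrow> continuous_on S (\<lambda>x. g (u x))"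
  using continuous_on_compose[of S u g] continuous_on_discrete[of "u ` S" g] by (simp add: o_def)

lemma cohomologous_sym: "cohomologous N A f g \<Longrightarrow> cohomologous N A g f"
  unfolding cohomologous_def
proof (elim exE conjE)
  fix u assume "continuous_on (XA N A) u" "\<forall>x\<in>XA N A. f x - g x = u x - u (shift x)"
  then show "\<exists>v. continuous_on (XA N A) v \<and> (\<forall>x\<in>XA N A. g x - f x = v x - v (shift x))"
    by (intro exI[of _ "\<lambda>x. - u x"]) (auto intro: continuous_on_int_compose simp: algebra_simps)
qed

lemma cohomologous_trans:
  "cohomologous N A f g \<Longrightarrow> cohomologous N A g h \<Longrightarrow> cohomologous N A f h"
  unfolding cohomologous_def
proof (elim exE conjE)
  fix u v
  assume u: "continuous_on (XA N A) u" "\<forall>x\<in>XA N A. f x - g x = u x - u (shift x)"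
    and v: "continuous_on (XA N A) v" "\<forall>x\<in>XA N A. g x - h x = v x - v (shift x)"
  have "\<forall>x\<in>XA N A. f x - h x = (u x + v x) - (u (shift x) + v (shift x))"
  proof
    fix x assume "x \<in> XA N A"
    with u(2) v(2) show "f x - h x = (u x + v x) - (u (shift x) + v (shift x))" by force
  qed
  with continuous_on_add[OF u(1) v(1)]
  show "\<exists>u. continuous_on (XA N A) u \<and> (\<forall>x\<in>XA N A. f x - h x = u x - u (shift x))"
    by blast
qed

lemma cohomologous_affine:
  "cohomologous N A f g \<Longrightarrow>
     cohomologous N A (\<lambda>x. a * f x + h x) (\<lambda>x. a * g x + h x)"
  unfolding cohomologous_def
proof (elim exE conjE)
  fix u assume "continuous_on (XA N A) u" "\<forall>x\<in>XA N A. f x - g x = u x - u (shift x)"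
  then show "\<exists>v. continuous_on (XA N A) v \<and>
      (\<forall>x\<in>XA N A. a * f x + h x - (a * g x + h x) = v x - v (shift x))"
    by (intro exI[of _ "\<lambda>x. a * u x"])
       (auto intro: continuous_on_int_compose simp: right_diff_distrib[symmetric])
qed

lemma cohomologous_eq_on_XA:
  "\<forall>x\<in>XA N A. f x = g x \<Longrightarrow> cohomologous N A f g"
  unfolding cohomologous_def by (intro exI[of _ "\<lambda>_. 0"]) auto

lemma in_HA_plus_cohomologous:
  "in_HA_plus N A f \<Longrightarrow> cohomologous N A f g \<Longrightarrow> in_HA_plus N A g"
  unfolding in_HA_plus_def by (meson cohomologous_sym cohomologous_trans)

lemma order_unit_cohomologous:
  assumes "order_unit N A f" "cohomologous N A f g"
  shows "order_unit N A g"
  unfolding order_unit_def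
proof (intro conjI allI impI)
  show "in_HA_plus N A g"
    using assms in_HA_plus_cohomologous unfolding order_unit_def by blast
  fix u :: "(nat \<Rightarrow> nat) \<Rightarrow> int" assume "continuous_on (XA N A) u"
  then obtain n :: nat where "in_HA_plus N A (\<lambda>x. int n * f x - u x)"
    using assms(1) unfolding order_unit_def by blast
  moreover have "cohomologous N A (\<lambda>x. int n * f x - u x) (\<lambda>x. int n * g x - u x)"
    using cohomologous_affine[OF assms(2), of "int n" "\<lambda>x. - u x"] by simp
  ultimately show "\<exists>n::nat. in_HA_plus N A (\<lambda>x. int n * g x - u x)"
    using in_HA_plus_cohomologous by blast
qed

definition generated_equiv :: "'a set \<Rightarrow> ('a \<times> 'a) set \<Rightarrow> ('a \<times> 'a) set" where
  "generated_equiv D G = Id_on D \<union> (G \<union> G\<inverse>)\<^sup>+"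

lemma generated_equiv_eq_rtrancl:
  assumes "G \<subseteq> D \<times> D"
  shows "generated_equiv D G = (G \<union> G\<inverse>)\<^sup>* \<inter> D \<times> D"
proof -
  have "(G \<union> G\<inverse>)\<^sup>+ \<subseteq> D \<times> D"
    using assms by (intro trancl_subset_Sigma) auto
  then show ?thesis
    unfolding generated_equiv_def by (auto simp: rtrancl_eq_or_trancl)
qed

lemma equiv_generated_equiv:
  assumes "G \<subseteq> D \<times> D"
  shows "equiv D (generated_equiv D G)"
  unfolding generated_equiv_eq_rtrancl[OF assms]
proof (rule equivI)
  show "(G \<union> G\<inverse>)\<^sup>* \<inter> D \<times> D \<subseteq> D \<times> D" by blast
  show "refl_on D ((G \<union> G\<inverse>)\<^sup>* \<inter> D \<times> D)" by (auto intro: refl_onI)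
  show "sym ((G \<union> G\<inverse>)\<^sup>* \<inter> D \<times> D)"
    by (intro sym_Int sym_rtrancl) (auto simp: sym_def)
  show "trans ((G \<union> G\<inverse>)\<^sup>* \<inter> D \<times> D)"
    by (intro trans_Int trans_rtrancl) (auto simp: trans_def)
qed

lemma generated_equiv_map:
  assumes D: "\<And>p. p \<in> D \<Longrightarrow> f p \<in> D'"
    and G: "\<And>p q. (p, q) \<in> G \<Longrightarrow> (f p, f q) \<in> G'"
    and pq: "(p, q) \<in> generated_equiv D G"
  shows "(f p, f q) \<in> generated_equiv D' G'"
proof -
  have "(f p, f q) \<in> (G' \<union> G'\<inverse>)\<^sup>+" if "(p, q) \<in> (G \<union> G\<inverse>)\<^sup>+"
    using that
  proof (induction rule: trancl_induct)
    case (base q)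
    then show ?case using G by blast
  next
    case (step q r)
    then have "(f q, f r) \<in> G' \<union> G'\<inverse>" using G by blast
    with step.IH show ?case by (rule trancl_into_trancl)
  qed
  with pq D show ?thesis unfolding generated_equiv_def by blast
qed

lemma generated_equiv_transport:
  assumes TS: "\<And>q. T (S q) = q" and ST: "\<And>p. S (T p) = p"
    and TD: "\<And>p. p \<in> D \<longleftrightarrow> T p \<in> D'"
    and TG: "\<And>p q. (p, q) \<in> G \<longleftrightarrow> (T p, T q) \<in> G'"
  shows "(p, q) \<in> generated_equiv D G \<longleftrightarrow> (T p, T q) \<in> generated_equiv D' G'"
proof
  show "(p, q) \<in> generated_equiv D G \<Longrightarrow> (T p, T q) \<in> generated_equiv D' G'"
    by (rule generated_equiv_map) (use TD TG in auto)
  assume "(T p, T q) \<in> generated_equiv D' G'"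
  then have "(S (T p), S (T q)) \<in> generated_equiv D G"
    by (rule generated_equiv_map[rotated 2]) (use TD TG TS in \<open>metis\<close>)+
  then show "(p, q) \<in> generated_equiv D G" by (simp only: ST)
qed

lemma Image_transport:
  assumes TS: "\<And>q. T (S q) = q" and TR: "\<And>p q. (p, q) \<in> R \<longleftrightarrow> (T p, T q) \<in> R'"
  shows "T ` (R `` X) = R' `` (T ` X)"
proof
  show "T ` (R `` X) \<subseteq> R' `` (T ` X)" using TR by blast
  show "R' `` (T ` X) \<subseteq> T ` (R `` X)"
  proof
    fix q assume "q \<in> R' `` (T ` X)"
    then obtain p where "p \<in> X" "(T p, T (S q)) \<in> R'" by (auto simp: TS)
    then show "q \<in> T ` (R `` X)" using TR TS by (metis ImageI image_eqI)
  qed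
qed

definition quotient_topology :: "'a::topological_space set \<Rightarrow> ('a \<times> 'a) set \<Rightarrow> 'a set topology" where
  "quotient_topology D R = topology (\<lambda>U. U \<subseteq> D // R \<and> openin (top_of_set D) (\<Union>U))"

lemma Union_Int_quotient:
  assumes "equiv D R" "U \<subseteq> D // R" "V \<subseteq> D // R"
  shows "\<Union>(U \<inter> V) = \<Union>U \<inter> \<Union>V"
  using quotient_disj[OF assms(1)] assms(2,3) by blast

lemma openin_quotient_topology:
  assumes "equiv D R"
  shows "openin (quotient_topology D R) U \<longleftrightarrow> U \<subseteq> D // R \<and> openin (top_of_set D) (\<Union>U)"
proof -
  have "istopology (\<lambda>U. U \<subseteq> D // R \<and> openin (top_of_set D) (\<Union>U))"
    unfolding istopology_def
  proof (rule conjI; intro allI impI)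
    fix U V assume "U \<subseteq> D // R \<and> openin (top_of_set D) (\<Union>U)"
      "V \<subseteq> D // R \<and> openin (top_of_set D) (\<Union>V)"
    then show "U \<inter> V \<subseteq> D // R \<and> openin (top_of_set D) (\<Union>(U \<inter> V))"
      by (auto simp: Union_Int_quotient[OF assms])
  next
    fix K assume K: "\<forall>U\<in>K. U \<subseteq> D // R \<and> openin (top_of_set D) (\<Union>U)"
    have "openin (top_of_set D) (\<Union>(Union ` K))"
      using K by (intro openin_Union) blast
    moreover have "\<Union>(\<Union>K) = \<Union>(Union ` K)" by blast
    ultimately show "\<Union>K \<subseteq> D // R \<and> openin (top_of_set D) (\<Union>(\<Union>K))"
      using K by auto
  qed
  then show ?thesis
    unfolding quotient_topology_def by (simp add: topology_inverse')
qed

lemma topspace_quotient_topology: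
  assumes "equiv D R"
  shows "topspace (quotient_topology D R) = D // R"
proof -
  have "openin (quotient_topology D R) (D // R)"
    by (simp add: openin_quotient_topology[OF assms] Union_quotient[OF assms])
  then show ?thesis
    unfolding topspace_def by (auto simp: openin_quotient_topology[OF assms])
qed

lemma continuous_map_quotient_topology_image:
  assumes R: "equiv D R" and R': "equiv D' R'"
    and TS: "\<And>q. T (S q) = q"
    and TD: "\<And>p. p \<in> D \<longleftrightarrow> T p \<in> D'"
    and TR: "\<And>p q. (p, q) \<in> R \<longleftrightarrow> (T p, T q) \<in> R'"
    and T: "continuous_on D T"
  shows "continuous_map (quotient_topology D R) (quotient_topology D' R') ((`) T)"
proof -
  have class_image: "T ` (R `` {p}) = R' `` {T p}" for p
    using Image_transport[OF TS TR] by simp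
  have "(`) T \<in> D // R \<rightarrow> D' // R'"
    by (auto elim!: quotientE simp: class_image TD intro: quotientI)
  moreover have "openin (quotient_topology D R) {C \<in> D // R. T ` C \<in> V}"
    if V: "openin (quotient_topology D' R') V" for V
  proof -
    have V': "V \<subseteq> D' // R'" "openin (top_of_set D') (\<Union>V)"
      using V by (auto simp: openin_quotient_topology[OF R'])
    have "\<Union>{C \<in> D // R. T ` C \<in> V} = D \<inter> T -` \<Union>V"
    proof (intro equalityI subsetI)
      fix z assume "z \<in> D \<inter> T -` \<Union>V"
      then obtain Y where z: "z \<in> D" "Y \<in> V" "T z \<in> Y" by blast
      moreover obtain q where "Y = R' `` {q}"
        using z(2) V'(1) by (auto elim!: quotientE)
      ultimately have "Y = R' `` {T z}"
        using equiv_class_eq[OF R'] by blast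
      with z equiv_class_self[OF R z(1)] show "z \<in> \<Union>{C \<in> D // R. T ` C \<in> V}"
        by (auto simp: class_image intro!: exI[of _ "R `` {z}"] quotientI)
    qed (use Union_quotient[OF R] in auto)
    moreover have "openin (top_of_set D) (D \<inter> T -` \<Union>V)"
      by (rule continuous_openin_preimage[OF T _ V'(2)]) (use TD in \<open>auto simp: Pi_def\<close>)
    ultimately show ?thesis by (simp add: openin_quotient_topology[OF R])
  qed
  ultimately show ?thesis
    unfolding continuous_map_def topspace_quotient_topology[OF R] topspace_quotient_topology[OF R']
    by auto
qed

lemma homeomorphic_map_quotient_topology_image:
  assumes R: "equiv D R" and R': "equiv D' R'"
    and TS: "\<And>q. T (S q) = q" and ST: "\<And>p. S (T p) = p"
    and TD: "\<And>p. p \<in> D \<longleftrightarrow> T p \<in> D'"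
    and TR: "\<And>p q. (p, q) \<in> R \<longleftrightarrow> (T p, T q) \<in> R'"
    and T: "continuous_on D T" and S: "continuous_on D' S"
  shows "homeomorphic_map (quotient_topology D R) (quotient_topology D' R') ((`) T)"
  unfolding homeomorphic_map_maps homeomorphic_maps_def
proof (intro exI[of _ "(`) S"] conjI)
  show "continuous_map (quotient_topology D R) (quotient_topology D' R') ((`) T)"
    by (rule continuous_map_quotient_topology_image[OF R R' TS TD TR T])
  have SD: "p \<in> D' \<longleftrightarrow> S p \<in> D" for p using TD[of "S p"] TS[of p] by simp
  have SR: "(p, q) \<in> R' \<longleftrightarrow> (S p, S q) \<in> R" for p q using TR[of "S p" "S q"] TS by simp
  show "continuous_map (quotient_topology D' R') (quotient_topology D R) ((`) S)"
    by (rule continuous_map_quotient_topology_image[OF R' R ST SD SR S])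
qed (simp_all add: image_image TS ST)

lemma shift_in_XA: "x \<in> XA N A \<Longrightarrow> shift x \<in> XA N A"
  by (simp add: XA_def shift_def)

lemma continuous_on_shift: "continuous_on S shift"
  unfolding shift_def
  by (intro continuous_on_coordinatewise_then_product continuous_on_product_coordinates
      continuous_on_subset[OF continuous_on_product_coordinates subset_UNIV])

lemma compact_XA: "compact (XA N A)"
proof -
  define P where "P = PiE UNIV (\<lambda>_::nat. {1..N})"
  have "compactin (product_topology (\<lambda>_. euclidean) UNIV) P"
    unfolding P_def by (subst compactin_PiE) (auto intro: finite_imp_compact)
  then have "compact P" by (simp add: euclidean_product_topology)
  have closed_coordinate_vimage: "closed ((\<lambda>x::nat \<Rightarrow> nat. x m) -` S)" for m S
    by (rule closed_vimage[OF _ continuous_on_product_coordinates]) (simp add: closed_def open_discrete)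
  have "XA N A = P \<inter> (\<Inter>n. \<Union>i\<in>{1..N}. (\<lambda>x. x n) -` {i} \<inter> (\<lambda>x. x (Suc n)) -` {j. A i j = 1})"
    unfolding XA_def P_def by (auto simp: PiE_def extensional_def)
  moreover have "closed (\<Inter>n. \<Union>i\<in>{1..N}. (\<lambda>x::nat \<Rightarrow> nat. x n) -` {i} \<inter> (\<lambda>x. x (Suc n)) -` {j. A i j = 1})"
    by (intro closed_INT closed_UN closed_Int finite_atLeastAtMost ballI closed_coordinate_vimage)
  ultimately show ?thesis using \<open>compact P\<close> by (simp add: compact_Int_closed)
qed

lemma mem_susp_gen_iff:
  "(p, q) \<in> susp_gen N A l k b \<longleftrightarrow>
     p \<in> susp_dom N A b \<and> snd p \<ge> l (fst p) \<and>
     q = (shift (fst p), snd p - (l (fst p) - k (fst p)))"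
  by (cases p) (auto simp: susp_gen_def)

lemma susp_gen_subset:
  assumes "\<forall>x\<in>XA N A. k x - b (shift x) \<ge> 0"
  shows "susp_gen N A l k b \<subseteq> susp_dom N A b \<times> susp_dom N A b"
  using assms by (force simp: susp_gen_def susp_dom_def shift_in_XA)

lemma susp_space_eq_quotient_topology:
  "susp_space N A l k b = quotient_topology (susp_dom N A b) (susp_rel N A l k b)"
  unfolding susp_space_def quotient_topology_def ..

lemma susp_rel_eq_generated_equiv:
  "susp_rel N A l k b = generated_equiv (susp_dom N A b) (susp_gen N A l k b)"
  unfolding susp_rel_def generated_equiv_def ..

lemma order_unit_suspension_triplet:
  assumes "suspension_triplet N A l k b" "\<forall>x\<in>XA N A. real_of_int (c x) = l x - k x"
  shows "order_unit N A c"
proof -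
  obtain c0 where "\<forall>x\<in>XA N A. l x - k x = of_int (c0 x)" "order_unit N A c0"
    using assms(1) unfolding suspension_triplet_def by blast
  with assms(2) show ?thesis
    by (metis cohomologous_eq_on_XA of_int_eq_iff order_unit_cohomologous)
qed

lemma suspension_triplet_translate:
  assumes lkb: "suspension_triplet N A l k b"
    and w: "continuous_on (XA N A) w" "\<forall>x\<in>XA N A. w x \<ge> 0"
    and c': "continuous_on (XA N A) c'" "order_unit N A c'"
      "\<forall>x\<in>XA N A. real_of_int (c' x) = (l x + w x) - (k x + w (shift x))"
  shows "suspension_triplet N A (\<lambda>x. l x + w x) (\<lambda>x. k x + w (shift x)) (\<lambda>x. b x + w x)"
proof -
  have "continuous_on (XA N A) (\<lambda>x. w (shift x))"
    by (rule continuous_on_compose2[OF w(1) continuous_on_shift]) (auto simp: shift_in_XA)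
  with lkb w c' show ?thesis
    unfolding suspension_triplet_def
    by (auto intro!: continuous_on_add exI[of _ c'] simp: shift_in_XA)
qed

lemma susp_translate:
  fixes l k b w :: "(nat \<Rightarrow> nat) \<Rightarrow> real"
  assumes kb: "\<forall>x\<in>XA N A. k x - b (shift x) \<ge> 0" and w: "continuous_on (XA N A) w"
  defines "T \<equiv> \<lambda>p. (fst p, snd p + w (fst p))"
    and "l' \<equiv> \<lambda>x. l x + w x" and "k' \<equiv> \<lambda>x. k x + w (shift x)" and "b' \<equiv> \<lambda>x. b x + w x"
  shows "homeomorphic_map (susp_space N A l k b) (susp_space N A l' k' b') ((`) T)"
    and "T ` base_map N A l k b x = base_map N A l' k' b' x"
    and "T ` susp_flow N A l k b t C = susp_flow N A l' k' b' t (T ` C)"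
proof -
  define S where "S = (\<lambda>p::(nat \<Rightarrow> nat) \<times> real. (fst p, snd p - w (fst p)))"
  let ?D = "susp_dom N A b" and ?D' = "susp_dom N A b'"
  let ?R = "susp_rel N A l k b" and ?R' = "susp_rel N A l' k' b'"
  have TS: "T (S q) = q" and ST: "S (T p) = p" for p q
    by (simp_all add: T_def S_def)
  have TD: "p \<in> ?D \<longleftrightarrow> T p \<in> ?D'" for p
    by (cases p) (simp add: T_def susp_dom_def b'_def)
  have TR: "(p, q) \<in> ?R \<longleftrightarrow> (T p, T q) \<in> ?R'" for p q
    unfolding susp_rel_eq_generated_equiv
  proof (rule generated_equiv_transport[OF TS ST TD])
    show "(p, q) \<in> susp_gen N A l k b \<longleftrightarrow> (T p, T q) \<in> susp_gen N A l' k' b'" for p q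
      unfolding mem_susp_gen_iff TD[of p, symmetric]
      by (cases p; cases q) (auto simp: T_def l'_def k'_def)
  qed
  have "\<forall>x\<in>XA N A. k' x - b' (shift x) \<ge> 0"
    using kb by (simp add: k'_def b'_def)
  then have R: "equiv ?D ?R" and R': "equiv ?D' ?R'"
    using kb unfolding susp_rel_eq_generated_equiv
    by (auto intro!: equiv_generated_equiv susp_gen_subset)
  have w_fst: "continuous_on (susp_dom N A b'') (\<lambda>p. w (fst p))" for b''
    by (rule continuous_on_compose2[OF w continuous_on_fst[OF continuous_on_id]])
       (auto simp: susp_dom_def)
  show "homeomorphic_map (susp_space N A l k b) (susp_space N A l' k' b') ((`) T)"
    unfolding susp_space_eq_quotient_topology T_def
    by (rule homeomorphic_map_quotient_topology_image[OF R R' TS ST TD TR, unfolded T_def S_def])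
       (intro continuous_intros w_fst)+
  show "T ` base_map N A l k b x = base_map N A l' k' b' x"
    using Image_transport[OF TS TR, of "{(x, b x)}"]
    by (simp add: base_map_def susp_class_def T_def b'_def)
  have "T ` ((\<lambda>(x, r). (x, r + t)) ` C) = (\<lambda>(x, r). (x, r + t)) ` (T ` C)"
    unfolding image_image by (rule image_cong) (auto simp: T_def)
  then show "T ` susp_flow N A l k b t C = susp_flow N A l' k' b' t (T ` C)"
    unfolding susp_flow_def Image_transport[OF TS TR] by simp
qed

theorem lemma2p6:
  fixes N :: nat and A :: "nat \<Rightarrow> nat \<Rightarrow> nat"
    and l k b :: "(nat \<Rightarrow> nat) \<Rightarrow> real" and c c' :: "(nat \<Rightarrow> nat) \<Rightarrow> int"
  assumes "N > 1"
    and "zero_one_matrix N A"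
    and "irreducible_matrix N A"
    and "\<not> permutation_matrix N A"
    and "suspension_triplet N A l k b"
    and "continuous_on (XA N A) c"
    and "\<forall>x\<in>XA N A. real_of_int (c x) = l x - k x"
    and "continuous_on (XA N A) c'"
    and "cohomologous N A c c'"
  shows "\<exists>l' k' b'. suspension_triplet N A l' k' b' \<and>
           (\<forall>x\<in>XA N A. real_of_int (c' x) = l' x - k' x) \<and>
           (\<exists>\<Phi>. homeomorphic_map (susp_space N A l k b) (susp_space N A l' k' b') \<Phi> \<and>
                (\<forall>x\<in>XA N A. \<Phi> (base_map N A l k b x) = base_map N A l' k' b' x) \<and>
                (\<forall>t::real. t \<ge> 0 \<longrightarrow>
                   (\<forall>C\<in>topspace (susp_space N A l k b).
                      \<Phi> (susp_flow N A l k b t C) = susp_flow N A l' k' b' t (\<Phi> C))))"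
proof -
  obtain u where u: "continuous_on (XA N A) u" "\<forall>x\<in>XA N A. c x - c' x = u x - u (shift x)"
    using assms(9) unfolding cohomologous_def by blast
  have "bdd_above ((\<lambda>x. real_of_int (u x)) ` XA N A)"
    by (intro bounded_imp_bdd_above compact_imp_bounded compact_continuous_image
        continuous_intros u(1) compact_XA)
  then obtain M where M: "\<forall>x\<in>XA N A. real_of_int (u x) \<le> M"
    unfolding bdd_above_def by blast
  define w where "w = (\<lambda>x. M - real_of_int (u x))"
  have w: "continuous_on (XA N A) w" "\<forall>x\<in>XA N A. w x \<ge> 0"
    using M u(1) unfolding w_def by (auto intro!: continuous_intros)
  have c': "\<forall>x\<in>XA N A. real_of_int (c' x) = (l x + w x) - (k x + w (shift x))"
  proof
    fix x assume "x \<in> XA N A"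
    then have "real_of_int (c x) - real_of_int (c' x) = real_of_int (u x) - real_of_int (u (shift x))"
      "real_of_int (c x) = l x - k x"
      using assms(7) u(2) by (metis of_int_diff)+
    then show "real_of_int (c' x) = (l x + w x) - (k x + w (shift x))"
      by (simp add: w_def)
  qed
  have "order_unit N A c'"
    using order_unit_cohomologous[OF order_unit_suspension_triplet[OF assms(5,7)] assms(9)] .
  then have "suspension_triplet N A (\<lambda>x. l x + w x) (\<lambda>x. k x + w (shift x)) (\<lambda>x. b x + w x)"
    using suspension_triplet_translate[OF assms(5) w assms(8)] c' by blast
  moreover have kb: "\<forall>x\<in>XA N A. k x - b (shift x) \<ge> 0"
    using assms(5) unfolding suspension_triplet_def by blast
  ultimately show ?thesis
    using c' susp_translate[OF kb w(1), of l] by blast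
qed

end
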